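(* Assume $n$ is even. If $n\equiv 0\pmod 4$ and $q$ is odd, then exactly two lines of $\mathcal D$ are fixed (setwise) by $j$; otherwise exactly one line of $\mathcal D$ is fixed by $j$.
   Context: Let $q$ be a prime power, $F=\mathbb F_q$, $n\ge 2$ an integer, and $L=\mathbb F_{q^n}\supseteq F$. Regard $L$ as an $n$-dimensional $F$-vector space; $\mathrm{PG}(n-1,q)$ denotes the projective space whose points are the one-dimensional $F$-subspaces $Fx$, $x\in L^*$, and whose lines are the two-dimensional $F$-subspaces (identified with their sets of points). Define $j:\mathrm{PG}(n-1,q)\to\mathrm{PG}(n-1,q)$ by $j(Fx)=Fx^{-1}$. When $n$ is even, $C$ denotes the unique subfield of $L$ of order $q^2$; for $x\in L^*$, $Cx$ is a two-dimensional $F$-subspace of $L$, regarded as a line of $\mathrm{PG}(n-1,q)$, and $\mathcal D=\{Cx: x\in L^*\}$ is the Desarguesian line spread. A line $\ell$ is fixed by $j$ if $j(\ell)=\ell$ as sets of points. *)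

theory Defs
  imports Main "HOL-Computational_Algebra.Primes"
begin

definition is_subfield :: "'a::field set \<Rightarrow> bool" where
  "is_subfield K \<longleftrightarrow> 0 \<in> K \<and> 1 \<in> K \<and>
     (\<forall>x\<in>K. \<forall>y\<in>K. x + y \<in> K \<and> x * y \<in> K) \<and>
     (\<forall>x\<in>K. - x \<in> K) \<and> (\<forall>x\<in>K. x \<noteq> 0 \<longrightarrow> inverse x \<in> K)"

text \<open>The point F x of PG(n-1,q): the one-dimensional F-subspace spanned by x.\<close>
definition pt :: "'a::field set \<Rightarrow> 'a \<Rightarrow> 'a set" where
  "pt F x = (\<lambda>c. c * x) ` F"

definition points :: "'a::field set \<Rightarrow> 'a set set" where
  "points F = {pt F x | x. x \<noteq> 0}"

definition jmap :: "'a::field set \<Rightarrow> 'a set \<Rightarrow> 'a set" where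
  "jmap F P = pt F (inverse (SOME x. x \<noteq> 0 \<and> P = pt F x))"

text \<open>The line C x (a 2-dimensional F-subspace), identified with its set of points.\<close>
definition lineD :: "'a::field set \<Rightarrow> 'a set \<Rightarrow> 'a \<Rightarrow> 'a set set" where
  "lineD F C x = {pt F y | y. y \<in> (\<lambda>c. c * x) ` C \<and> y \<noteq> 0}"

definition spreadD :: "'a::field set \<Rightarrow> 'a set \<Rightarrow> 'a set set set" where
  "spreadD F C = {lineD F C x | x. x \<noteq> 0}"

end

theory Submission
  imports Defs "HOL-Computational_Algebra.Polynomial"
begin

text \<open>
  The line \<open>C x\<close> is mapped by \<open>j\<close> onto \<open>C x\<inverse>\<close>, so it is fixed iff \<open>x\<^sup>2 \<in> C\<close>. Each fixed
  line is spanned by exactly \<open>q\<^sup>2 - 1\<close> elements of \<open>G = {x \<noteq> 0. x\<^sup>2 \<in> C}\<close>, so the number of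
  fixed lines is \<open>|G| / (q\<^sup>2 - 1)\<close>. In characteristic 2 squaring is injective, hence \<open>G = C\<^sup>*\<close>.
  Otherwise \<open>|G|\<close> is twice the number of elements of \<open>C\<^sup>*\<close> that are squares in \<open>L\<close>, and Euler's
  criterion decides which these are: all of \<open>C\<^sup>*\<close> when the index \<open>m = (q\<^sup>n - 1)/(q\<^sup>2 - 1)\<close> is
  even, i.e. when \<open>4 dvd n\<close>, and only the squares of \<open>C\<close> (half of \<open>C\<^sup>*\<close>) when \<open>m\<close> is odd.
\<close>

lemma
  assumes "is_subfield K"
  shows subfield_zero: "0 \<in> K" and subfield_one: "1 \<in> K"
    and subfield_add: "x \<in> K \<Longrightarrow> y \<in> K \<Longrightarrow> x + y \<in> K"
    and subfield_mult: "x \<in> K \<Longrightarrow> y \<in> K \<Longrightarrow> x * y \<in> K"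
    and subfield_uminus: "x \<in> K \<Longrightarrow> - x \<in> K"
    and subfield_inverse: "x \<in> K \<Longrightarrow> inverse x \<in> K"
  using assms unfolding is_subfield_def by (blast, blast, blast, blast, blast, metis inverse_zero)

lemma subfield_diff: "is_subfield K \<Longrightarrow> x \<in> K \<Longrightarrow> y \<in> K \<Longrightarrow> x - y \<in> K"
  by (metis diff_conv_add_uminus subfield_add subfield_uminus)

lemma subfield_divide: "is_subfield K \<Longrightarrow> x \<in> K \<Longrightarrow> y \<in> K \<Longrightarrow> x / y \<in> K"
  by (simp add: divide_inverse subfield_mult subfield_inverse)

lemma subfield_power: "is_subfield K \<Longrightarrow> x \<in> K \<Longrightarrow> x ^ m \<in> K"
  by (induction m) (auto simp: subfield_one subfield_mult)

lemma subfield_UNIV: "is_subfield (UNIV :: 'a::field set)"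
  by (simp add: is_subfield_def)

lemma card_subfield_minus_zero:
  "is_subfield K \<Longrightarrow> card (K - {0}) = card K - 1"
  by (simp add: subfield_zero)

lemma card_subfield_ge_2:
  fixes K :: "'a::{field,finite} set"
  assumes "is_subfield K"
  shows "card K \<ge> 2"
proof -
  have "card {0::'a, 1} \<le> card K"
    using assms by (intro card_mono) (auto simp: subfield_zero subfield_one)
  then show ?thesis by simp
qed

lemma card_roots_of_unity_le:
  assumes "d \<ge> 1"
  shows "card {x::'a::field. x ^ d = 1} \<le> d"
proof -
  define p :: "'a poly" where "p = monom 1 d - 1"
  have "coeff p d = 1"
    using assms by (simp add: p_def coeff_monom)
  then have "p \<noteq> 0" by auto
  have "degree p \<le> d"
    unfolding p_def by (rule degree_diff_le) (auto simp: degree_monom_le)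
  have "{x::'a. x ^ d = 1} = {x. poly p x = 0}"
    by (auto simp: p_def poly_monom)
  also have "card \<dots> \<le> degree p"
    by (rule card_poly_roots_bound) fact
  finally show ?thesis
    using \<open>degree p \<le> d\<close> by simp
qed

lemma card_eq_mult_card_image_if_fibers:
  assumes "finite A" and "\<And>b. b \<in> f ` A \<Longrightarrow> card {a \<in> A. f a = b} = k"
  shows "card A = k * card (f ` A)"
proof -
  have "card A = card (\<Union>b\<in>f ` A. {a \<in> A. f a = b})"
    by (rule arg_cong[where f = card]) auto
  also have "\<dots> = (\<Sum>b\<in>f ` A. card {a \<in> A. f a = b})"
    by (rule card_UN_disjoint) (use assms(1) in auto)
  also have "\<dots> = k * card (f ` A)"
    using assms(2) by simp
  finally show ?thesis .
qed

lemma subfield_power_card_minus_1: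
  fixes K :: "'a::{field,finite} set"
  assumes K: "is_subfield K" and c: "c \<in> K" "c \<noteq> 0"
  shows "c ^ (card K - 1) = 1"
proof -
  let ?S = "K - {0}"
  have "bij_betw (\<lambda>y. c * y) ?S ?S"
    by (rule bij_betw_byWitness[where f' = "\<lambda>y. y / c"])
      (use c K in \<open>auto simp: subfield_mult subfield_divide\<close>)
  then have "prod (\<lambda>y. y) ?S = prod (\<lambda>y. c * y) ?S"
    using prod.reindex_bij_betw[of _ ?S ?S "\<lambda>y. y"] by simp
  also have "\<dots> = c ^ card ?S * prod (\<lambda>y. y) ?S"
    by (simp add: prod.distrib)
  finally have "c ^ card ?S = 1"
    by (simp add: prod_zero_iff)
  then show ?thesis
    using card_subfield_minus_zero[OF K] by simp
qed

lemma subfield_nonzero_eq_roots_of_unity: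
  fixes K :: "'a::{field,finite} set"
  assumes K: "is_subfield K"
  shows "K - {0} = {x. x ^ (card K - 1) = 1}"
proof (rule card_seteq)
  show "K - {0} \<subseteq> {x. x ^ (card K - 1) = 1}"
    using subfield_power_card_minus_1[OF K] by blast
  have "card K - 1 \<ge> 1"
    using card_subfield_ge_2[OF K] by simp
  then show "card {x::'a. x ^ (card K - 1) = 1} \<le> card (K - {0})"
    using card_roots_of_unity_le by (simp add: card_subfield_minus_zero[OF K])
qed simp

lemma subfield_subset_if_dvd:
  fixes F C :: "'a::{field,finite} set"
  assumes F: "is_subfield F" and C: "is_subfield C" and dvd: "card F - 1 dvd card C - 1"
  shows "F \<subseteq> C"
proof
  fix x assume "x \<in> F"
  show "x \<in> C"
  proof (cases "x = 0")
    case True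
    then show ?thesis using subfield_zero[OF C] by simp
  next
    case False
    obtain m where "card C - 1 = (card F - 1) * m" using dvd by blast
    then have "x ^ (card C - 1) = 1"
      using subfield_power_card_minus_1[OF F \<open>x \<in> F\<close> False] by (simp add: power_mult)
    then show ?thesis
      using subfield_nonzero_eq_roots_of_unity[OF C] by blast
  qed
qed

lemma of_nat_card_subfield:
  fixes K :: "'a::{field,finite} set"
  assumes K: "is_subfield K"
  shows "(of_nat (card K) :: 'a) = 0"
proof -
  have "bij_betw (\<lambda>y. 1 + y) K K"
    by (rule bij_betw_byWitness[where f' = "\<lambda>y. y - 1"])
      (use K in \<open>auto simp: subfield_one subfield_add subfield_diff\<close>)
  then have "sum (\<lambda>y. y) K = sum (\<lambda>y. 1 + y) K"
    using sum.reindex_bij_betw[of _ K K "\<lambda>y. y"] by simp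
  also have "\<dots> = of_nat (card K) + sum (\<lambda>y. y) K"
    by (simp add: sum.distrib)
  finally show ?thesis by simp
qed

definition nonzero_squares :: "'a::field set \<Rightarrow> 'a set" where
  "nonzero_squares K = (\<lambda>y. y ^ 2) ` (K - {0})"

lemma card_eq_twice_card_squares:
  fixes S :: "'a::field set"
  assumes two: "(2::'a) \<noteq> 0" and "finite S" "0 \<notin> S" and neg: "\<And>x. x \<in> S \<Longrightarrow> - x \<in> S"
  shows "card S = 2 * card ((\<lambda>x. x ^ 2) ` S)"
proof (rule card_eq_mult_card_image_if_fibers[OF \<open>finite S\<close>])
  fix b assume "b \<in> (\<lambda>x. x ^ 2) ` S"
  then obtain y where y: "y \<in> S" "b = y ^ 2" by blast
  have "{a \<in> S. a ^ 2 = b} = {y, - y}"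
    using y neg by (auto simp: power2_eq_iff)
  moreover have "y \<noteq> - y"
  proof
    assume "y = - y"
    then have "2 * y = 0"
      by (metis mult_2 add.right_inverse)
    then show False
      using two y(1) \<open>0 \<notin> S\<close> by auto
  qed
  ultimately show "card {a \<in> S. a ^ 2 = b} = 2" by simp
qed

lemma card_subfield_minus_1_eq:
  fixes K :: "'a::{field,finite} set"
  assumes K: "is_subfield K" and two: "(2::'a) \<noteq> 0"
  shows "card K - 1 = 2 * card (nonzero_squares K)"
  using card_eq_twice_card_squares[OF two, of "K - {0}"]
  by (simp add: nonzero_squares_def card_subfield_minus_zero[OF K] subfield_uminus[OF K])

lemma two_ne_zero_iff_odd_card_subfield:
  fixes K :: "'a::{field,finite} set"
  assumes K: "is_subfield K"
  shows "(2::'a) \<noteq> 0 \<longleftrightarrow> odd (card K)"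
proof
  assume "(2::'a) \<noteq> 0"
  then have "even (card K - 1)"
    using card_subfield_minus_1_eq[OF K] by simp
  then show "odd (card K)"
    using card_subfield_ge_2[OF K] by (cases "card K") auto
next
  assume "odd (card K)"
  then obtain k where "card K = 2 * k + 1" by (rule oddE)
  then have "1 + (2::'a) * of_nat k = 0"
    using of_nat_card_subfield[OF K] by simp
  then show "(2::'a) \<noteq> 0"
    by auto
qed

lemma subfield_Euler_criterion:
  fixes K :: "'a::{field,finite} set"
  assumes K: "is_subfield K" and two: "(2::'a) \<noteq> 0"
    and c: "c \<in> K" "c \<noteq> 0" "c ^ ((card K - 1) div 2) = 1"
  shows "c \<in> nonzero_squares K"
proof -
  define h where "h = (card K - 1) div 2"
  have h: "card K - 1 = 2 * h" "card (nonzero_squares K) = h"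
    using card_subfield_minus_1_eq[OF K two] by (simp_all add: h_def)
  have sub: "nonzero_squares K \<subseteq> {x. x ^ h = 1}"
  proof
    fix x assume "x \<in> nonzero_squares K"
    then obtain y where y: "y \<in> K" "y \<noteq> 0" "x = y ^ 2"
      by (auto simp: nonzero_squares_def)
    have "x ^ h = y ^ (card K - 1)"
      using y h by (simp add: power_mult)
    also have "\<dots> = 1"
      using subfield_power_card_minus_1[OF K y(1,2)] .
    finally show "x \<in> {x. x ^ h = 1}" by simp
  qed
  have "h \<ge> 1"
    using h(1) card_subfield_ge_2[OF K] by simp
  then have "card {x::'a. x ^ h = 1} \<le> card (nonzero_squares K)"
    using card_roots_of_unity_le h(2) by simp
  then have "nonzero_squares K = {x. x ^ h = 1}"
    using sub by (simp add: card_seteq)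
  then show ?thesis
    using c by (simp add: h_def)
qed

lemma subfield_nonzero_subset_squares_if_even_index:
  fixes C :: "'a::{field,finite} set"
  assumes C: "is_subfield C" and two: "(2::'a) \<noteq> 0"
    and index: "card (UNIV :: 'a set) - 1 = (card C - 1) * m" and "even m"
  shows "C - {0} \<subseteq> nonzero_squares UNIV"
proof
  fix c assume c: "c \<in> C - {0}"
  have "(card (UNIV :: 'a set) - 1) div 2 = (card C - 1) * (m div 2)"
    using index \<open>even m\<close> by auto
  then have "c ^ ((card (UNIV :: 'a set) - 1) div 2) = (c ^ (card C - 1)) ^ (m div 2)"
    by (simp add: power_mult)
  also have "\<dots> = 1"
    using subfield_power_card_minus_1[OF C] c by simp
  finally show "c \<in> nonzero_squares UNIV"
    using subfield_Euler_criterion[OF subfield_UNIV two] c by simp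
qed

lemma subfield_nonzero_inter_squares_if_odd_index:
  fixes C :: "'a::{field,finite} set"
  assumes C: "is_subfield C" and two: "(2::'a) \<noteq> 0"
    and index: "card (UNIV :: 'a set) - 1 = (card C - 1) * m" and "odd m"
  shows "(C - {0}) \<inter> nonzero_squares UNIV = nonzero_squares C"
proof (intro equalityI subsetI)
  fix c assume "c \<in> (C - {0}) \<inter> nonzero_squares UNIV"
  then obtain y where c: "c \<in> C" "c \<noteq> 0" "c = y ^ 2" "y \<noteq> 0"
    unfolding nonzero_squares_def by blast
  define h where "h = (card C - 1) div 2"
  have h: "card C - 1 = 2 * h"
    using card_subfield_minus_1_eq[OF C two] by (simp add: h_def)
  have "(c ^ h) ^ m = y ^ (card (UNIV :: 'a set) - 1)"
    unfolding index h c(3) by (simp add: power_mult)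
  also have "\<dots> = 1"
    using subfield_power_card_minus_1[OF subfield_UNIV, of y] c(4) by simp
  finally have "(c ^ h) ^ m = 1" .
  have "(c ^ h) ^ 2 = c ^ (card C - 1)"
    unfolding h power_even_eq ..
  also have "\<dots> = 1"
    using subfield_power_card_minus_1[OF C c(1,2)] .
  finally have "c ^ h = 1 \<or> c ^ h = - 1"
    by (simp add: power2_eq_1_iff)
  moreover have "c ^ h \<noteq> - 1"
  proof
    assume "c ^ h = - 1"
    then have "(- 1 :: 'a) = 1"
      using \<open>(c ^ h) ^ m = 1\<close> \<open>odd m\<close> by simp
    then show False
      using two by (metis one_add_one add.right_inverse)
  qed
  ultimately have "c ^ h = 1"
    by blast
  then show "c \<in> nonzero_squares C"
    using subfield_Euler_criterion[OF C two c(1,2)] by (simp add: h_def)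
next
  fix c assume "c \<in> nonzero_squares C"
  then show "c \<in> (C - {0}) \<inter> nonzero_squares UNIV"
    by (auto simp: nonzero_squares_def subfield_power[OF C])
qed

lemma square_roots_subfield_char_2:
  fixes C :: "'a::{field,finite} set"
  assumes C: "is_subfield C" and two: "(2::'a) = 0"
  shows "{x. x \<noteq> 0 \<and> x ^ 2 \<in> C} = C - {0}"
proof -
  have "x ^ 2 - y ^ 2 = (x - y) ^ 2" for x y :: 'a
    using two by (simp add: power2_diff mult_2 algebra_simps)
  then have inj: "inj (\<lambda>x::'a. x ^ 2)"
    by (intro injI) (metis eq_iff_diff_eq_0 zero_eq_power2)
  then have "(\<lambda>x. x ^ 2) ` C = C"
    using subfield_power[OF C] by (intro endo_inj_surj) (auto intro: inj_on_subset)
  then show ?thesis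
    using inj subfield_power[OF C] by (auto dest: injD)
qed

lemma card_square_roots_subfield:
  fixes C :: "'a::{field,finite} set"
  assumes C: "is_subfield C" and index: "card (UNIV :: 'a set) - 1 = (card C - 1) * m"
  shows "card {x. x \<noteq> 0 \<and> x ^ 2 \<in> C} = (if (2::'a) \<noteq> 0 \<and> even m then 2 else 1) * (card C - 1)"
proof (cases "(2::'a) = 0")
  case True
  then show ?thesis
    using square_roots_subfield_char_2[OF C] card_subfield_minus_zero[OF C] by simp
next
  case two: False
  have "(\<lambda>x. x ^ 2) ` {x. x \<noteq> 0 \<and> x ^ 2 \<in> C} = (C - {0}) \<inter> nonzero_squares UNIV"
    by (auto simp: nonzero_squares_def)
  then have roots: "card {x. x \<noteq> 0 \<and> x ^ 2 \<in> C} = 2 * card ((C - {0}) \<inter> nonzero_squares UNIV)"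
    using card_eq_twice_card_squares[OF two, of "{x. x \<noteq> 0 \<and> x ^ 2 \<in> C}"] by simp
  show ?thesis
  proof (cases "even m")
    case True
    then have "(C - {0}) \<inter> nonzero_squares UNIV = C - {0}"
      using subfield_nonzero_subset_squares_if_even_index[OF C two index] by blast
    then show ?thesis
      using roots True two card_subfield_minus_zero[OF C] by simp
  next
    case False
    then show ?thesis
      using roots two subfield_nonzero_inter_squares_if_odd_index[OF C two index]
        card_subfield_minus_1_eq[OF C two] by simp
  qed
qed

lemma pt_eq_iff:
  assumes F: "is_subfield F" and x: "(x::'a::field) \<noteq> 0" and y: "y \<noteq> 0"
  shows "pt F x = pt F y \<longleftrightarrow> y / x \<in> F"
proof
  assume "pt F x = pt F y"
  then have "y \<in> pt F x"
    using subfield_one[OF F] by (force simp: pt_def)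
  then show "y / x \<in> F"
    using x by (auto simp: pt_def)
next
  assume d: "y / x \<in> F"
  show "pt F x = pt F y"
  proof (intro equalityI subsetI)
    fix z assume "z \<in> pt F x"
    then obtain c where c: "c \<in> F" "z = c * x"
      by (auto simp: pt_def)
    have "c / (y / x) \<in> F"
      using c(1) d subfield_divide[OF F] by blast
    moreover have "z = (c / (y / x)) * y"
      using c(2) x y by (simp add: field_simps)
    ultimately show "z \<in> pt F y"
      unfolding pt_def by (rule rev_image_eqI)
  next
    fix z assume "z \<in> pt F y"
    then obtain c where c: "c \<in> F" "z = c * y"
      by (auto simp: pt_def)
    have "c * (y / x) \<in> F"
      using c(1) d subfield_mult[OF F] by blast
    moreover have "z = (c * (y / x)) * x"
      using c(2) x by simp
    ultimately show "z \<in> pt F x"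
      unfolding pt_def by (rule rev_image_eqI)
  qed
qed

lemma jmap_pt:
  assumes F: "is_subfield F" and x: "(x::'a::field) \<noteq> 0"
  shows "jmap F (pt F x) = pt F (inverse x)"
proof -
  \<comment> \<open>\<open>jmap\<close> inverts an arbitrary representative; any two differ by a factor in \<open>F\<close>\<close>
  define z where "z = (SOME z. z \<noteq> 0 \<and> pt F x = pt F z)"
  have "z \<noteq> 0 \<and> pt F x = pt F z"
    unfolding z_def by (rule someI[of _ x]) (use x in simp)
  then have "z \<noteq> 0" "z / x \<in> F"
    using pt_eq_iff[OF F x] by auto
  moreover have "inverse x / inverse z = z / x"
    by (simp add: field_simps)
  ultimately have "pt F (inverse z) = pt F (inverse x)"
    using pt_eq_iff[OF F] x by simp
  then show ?thesis
    by (simp add: jmap_def z_def)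
qed

lemma lineD_eq_image:
  "(x::'a::field) \<noteq> 0 \<Longrightarrow> lineD F C x = pt F ` (\<lambda>c. c * x) ` (C - {0})"
  by (auto simp: lineD_def)

lemma lineD_eq_iff:
  fixes x y :: "'a::field"
  assumes F: "is_subfield F" and C: "is_subfield C" and "F \<subseteq> C" and x: "x \<noteq> 0" and y: "y \<noteq> 0"
  shows "lineD F C x = lineD F C y \<longleftrightarrow> y / x \<in> C"
proof
  assume "lineD F C x = lineD F C y"
  moreover have "pt F y \<in> lineD F C y"
    using y subfield_one[OF C] by (force simp: lineD_eq_image)
  ultimately have "pt F y \<in> pt F ` (\<lambda>c. c * x) ` (C - {0})"
    using x by (simp add: lineD_eq_image)
  then obtain c where c: "c \<in> C" "c \<noteq> 0" "pt F (c * x) = pt F y"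
    by auto
  then have "y / (c * x) \<in> C"
    using pt_eq_iff[OF F, of "c * x" y] x y \<open>F \<subseteq> C\<close> by auto
  then have "c * (y / (c * x)) \<in> C"
    using c(1) subfield_mult[OF C] by blast
  then show "y / x \<in> C"
    using c(2) by simp
next
  assume d: "y / x \<in> C"
  have "(\<lambda>c. c * y) ` (C - {0}) = (\<lambda>c. c * x) ` (C - {0})"
  proof (intro equalityI image_subsetI)
    fix c assume c: "c \<in> C - {0}"
    then have "c * (y / x) \<in> C - {0}"
      using subfield_mult[OF C _ d] x y by simp
    moreover have "c * y = (c * (y / x)) * x"
      using x by simp
    ultimately show "c * y \<in> (\<lambda>c. c * x) ` (C - {0})"
      by (rule rev_image_eqI)
  next
    fix c assume c: "c \<in> C - {0}"
    then have "c / (y / x) \<in> C - {0}"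
      using subfield_divide[OF C _ d] x y by simp
    moreover have "c * x = (c / (y / x)) * y"
      using x y by simp
    ultimately show "c * x \<in> (\<lambda>c. c * y) ` (C - {0})"
      by (rule rev_image_eqI)
  qed
  then show "lineD F C x = lineD F C y"
    using x y by (simp add: lineD_eq_image)
qed

lemma jmap_image_lineD:
  fixes x :: "'a::field"
  assumes F: "is_subfield F" and C: "is_subfield C" and x: "x \<noteq> 0"
  shows "jmap F ` lineD F C x = lineD F C (inverse x)"
proof -
  have "jmap F ` lineD F C x = (\<lambda>c. pt F (inverse c * inverse x)) ` (C - {0})"
    using x by (auto simp: lineD_eq_image image_image jmap_pt[OF F] intro!: image_cong)
  also have "\<dots> = pt F ` (\<lambda>c. c * inverse x) ` inverse ` (C - {0})"
    by (simp add: image_image)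
  also have "inverse ` (C - {0}) = C - {0}"
    using subfield_inverse[OF C] by (auto intro!: image_eqI[where x = "inverse c" for c])
  finally show ?thesis
    using x by (simp add: lineD_eq_image)
qed

lemma jmap_fixes_lineD_iff:
  fixes x :: "'a::field"
  assumes F: "is_subfield F" and C: "is_subfield C" and "F \<subseteq> C" and x: "x \<noteq> 0"
  shows "jmap F ` lineD F C x = lineD F C x \<longleftrightarrow> x ^ 2 \<in> C"
proof -
  have "jmap F ` lineD F C x = lineD F C x \<longleftrightarrow> lineD F C (inverse x) = lineD F C x"
    by (simp add: jmap_image_lineD[OF F C x])
  also have "\<dots> \<longleftrightarrow> x / inverse x \<in> C"
    using x by (intro lineD_eq_iff[OF F C \<open>F \<subseteq> C\<close>]) simp_all
  also have "x / inverse x = x ^ 2"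
    by (simp add: power2_eq_square divide_inverse)
  finally show ?thesis .
qed

lemma fixed_lines_eq:
  fixes F C :: "'a::field set"
  assumes F: "is_subfield F" and C: "is_subfield C" and "F \<subseteq> C"
  shows "{l \<in> spreadD F C. jmap F ` l = l} = lineD F C ` {x. x \<noteq> 0 \<and> x ^ 2 \<in> C}"
  using jmap_fixes_lineD_iff[OF F C \<open>F \<subseteq> C\<close>] by (auto simp: spreadD_def)

lemma card_square_roots_eq_mult_card_lines:
  fixes F C :: "'a::{field,finite} set"
  assumes F: "is_subfield F" and C: "is_subfield C" and "F \<subseteq> C"
  defines "G \<equiv> {x. x \<noteq> 0 \<and> x ^ 2 \<in> C}"
  shows "card G = (card C - 1) * card (lineD F C ` G)"
proof (rule card_eq_mult_card_image_if_fibers)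
  fix b assume "b \<in> lineD F C ` G"
  then obtain x where x: "x \<noteq> 0" "x ^ 2 \<in> C" "b = lineD F C x"
    by (auto simp: G_def)
  have "{a \<in> G. lineD F C a = b} = (\<lambda>c. c * x) ` (C - {0})"
  proof (intro equalityI subsetI)
    fix a assume a: "a \<in> {a \<in> G. lineD F C a = b}"
    then have "a / x \<in> C - {0}"
      using lineD_eq_iff[OF F C \<open>F \<subseteq> C\<close> x(1), of a] x by (auto simp: G_def)
    moreover have "a = (a / x) * x"
      using x(1) by simp
    ultimately show "a \<in> (\<lambda>c. c * x) ` (C - {0})"
      by (rule rev_image_eqI)
  next
    fix a assume "a \<in> (\<lambda>c. c * x) ` (C - {0})"
    then obtain c where c: "c \<in> C" "c \<noteq> 0" "a = c * x"
      by blast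
    have "a ^ 2 = c ^ 2 * x ^ 2"
      using c(3) by (simp add: power_mult_distrib)
    then have "a ^ 2 \<in> C"
      using subfield_mult[OF C subfield_power[OF C c(1)] x(2)] by simp
    moreover have "lineD F C a = b"
      using lineD_eq_iff[OF F C \<open>F \<subseteq> C\<close> x(1), of a] c x by simp
    ultimately show "a \<in> {a \<in> G. lineD F C a = b}"
      using c x by (simp add: G_def)
  qed
  moreover have "card ((\<lambda>c. c * x) ` (C - {0})) = card C - 1"
    using x(1) card_subfield_minus_zero[OF C] by (simp add: card_image inj_on_def)
  ultimately show "card {a \<in> G. lineD F C a = b} = card C - 1"
    by simp
qed simp

lemma card_fixed_lines:
  fixes F C :: "'a::{field,finite} set"
  assumes F: "is_subfield F" and C: "is_subfield C" and "F \<subseteq> C"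
    and index: "card (UNIV :: 'a set) - 1 = (card C - 1) * m"
  shows "card {l \<in> spreadD F C. jmap F ` l = l} = (if (2::'a) \<noteq> 0 \<and> even m then 2 else 1)"
proof -
  have "(card C - 1) * card {l \<in> spreadD F C. jmap F ` l = l} = card {x. x \<noteq> 0 \<and> x ^ 2 \<in> C}"
    using card_square_roots_eq_mult_card_lines[OF F C \<open>F \<subseteq> C\<close>]
    by (simp add: fixed_lines_eq[OF F C \<open>F \<subseteq> C\<close>])
  also have "\<dots> = (card C - 1) * (if (2::'a) \<noteq> 0 \<and> even m then 2 else 1)"
    using card_square_roots_subfield[OF C index] by simp
  finally show ?thesis
    using card_subfield_ge_2[OF C] by simp
qed

lemma even_sum_powers_iff:
  assumes "odd (r::nat)"
  shows "even (\<Sum>i<t. r ^ i) \<longleftrightarrow> even t"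
  by (induction t) (use assms in auto)

lemma power_minus_1_eq_mult_sum:
  assumes "(r::nat) \<ge> 1"
  shows "r ^ t - 1 = (r - 1) * (\<Sum>i<t. r ^ i)"
proof -
  have "int (r ^ t - 1) = int r ^ t - 1"
    using assms by (simp add: of_nat_diff)
  also have "\<dots> = (int r - 1) * (\<Sum>i<t. int r ^ i)"
    by (rule power_diff_1_eq)
  also have "\<dots> = int ((r - 1) * (\<Sum>i<t. r ^ i))"
    using assms by (simp add: of_nat_diff)
  finally show ?thesis
    by (simp only: of_nat_eq_iff)
qed

theorem mainTheorem4:
  fixes F C :: "'a::{field,finite} set" and q n :: nat
  assumes q_pp: "\<exists>p k. prime p \<and> k \<ge> 1 \<and> q = p ^ k"
    and n_ge: "n \<ge> 2"
    and F_sub: "is_subfield F" and F_card: "card F = q"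
    and L_card: "card (UNIV :: 'a set) = q ^ n"
    and n_even: "even n"
    and C_sub: "is_subfield C" and C_card: "card C = q ^ 2"
  shows "card {l \<in> spreadD F C. jmap F ` l = l} =
           (if 4 dvd n \<and> odd q then 2 else 1)"
proof -
  obtain t where t: "n = 2 * t"
    using n_even by blast
  define m where "m = (\<Sum>i<t. (q ^ 2) ^ i)"
  have "q \<ge> 2"
    using card_subfield_ge_2[OF F_sub] F_card by simp
  then have index: "card (UNIV :: 'a set) - 1 = (card C - 1) * m"
    using power_minus_1_eq_mult_sum[of "q ^ 2" t] L_card C_card t by (simp add: m_def power_mult)
  have "card C - 1 = (card F - 1) * (q + 1)"
    using F_card C_card by (cases q) (simp_all add: power2_eq_square)
  then have "F \<subseteq> C"
    by (intro subfield_subset_if_dvd[OF F_sub C_sub]) simp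
  have "(2::'a) \<noteq> 0 \<longleftrightarrow> odd q"
    using two_ne_zero_iff_odd_card_subfield[OF F_sub] F_card by simp
  moreover have "even m \<longleftrightarrow> 4 dvd n" if "odd q"
    using even_sum_powers_iff[of "q ^ 2" t] that t by (auto simp: m_def)
  ultimately show ?thesis
    using card_fixed_lines[OF F_sub C_sub \<open>F \<subseteq> C\<close> index] by auto
qed

end
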